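(* Let $k \in \mathbb{R}$ and let $M$ be a real symmetric matrix whose diagonal entries are all equal to $k$ and whose off-diagonal entries are integers. Suppose that the multiplicity of $0$ as an eigenvalue of $M$ is greater than the maximum multiplicity of the non-zero eigenvalues of $M$. Then $k$ is an integer. *)

theory Defs
  imports "Jordan_Normal_Form.Char_Poly"
begin

text \<open>Multiplicity of a (real) eigenvalue: its order as a root of the characteristic polynomial
  (for a real symmetric matrix algebraic and geometric multiplicity coincide).\<close>
definition eig_mult :: "real mat \<Rightarrow> real \<Rightarrow> nat" where
  "eig_mult M \<mu> = order \<mu> (char_poly M)"

end

theory Submission
  imports Defs "HOL-Computational_Algebra.Field_as_Ring"
begin

text \<open>Write \<open>M = A + k I\<close> with \<open>A\<close> a symmetric integer matrix, so that the eigenvalues of \<open>M\<close>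
  are those of \<open>A\<close> shifted by \<open>k\<close>, with the same multiplicities. Then \<open>-k\<close> is the unique root of
  maximal multiplicity \<open>m\<close> of the integer polynomial \<open>\<chi>\<^sub>A\<close>. Applying \<open>p \<mapsto> gcd p p'\<close> to \<open>\<chi>\<^sub>A\<close>
  \<open>m - 1\<close> times lowers every root multiplicity by \<open>m - 1\<close> and keeps rational coefficients;
  since all complex roots of \<open>\<chi>\<^sub>A\<close> are real, the result is \<open>c (x + k)\<close>, so \<open>k\<close> is rational.
  Being also an algebraic integer, \<open>k\<close> is an integer.\<close>

lemma order_gcd:
  fixes p q :: "'a::{field_char_0,field_gcd} poly"
  assumes "p \<noteq> 0" "q \<noteq> 0"
  shows "order a (gcd p q) = min (order a p) (order a q)"
proof -
  have "n \<le> order a (gcd p q) \<longleftrightarrow> n \<le> min (order a p) (order a q)" for n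
    using assms by (metis gcd_eq_0_iff gcd_greatest_iff min.bounded_iff order_divides)
  then show ?thesis
    by (metis order.refl order.antisym)
qed

lemma order_gcd_pderiv:
  fixes p :: "'a::{field_char_0,field_gcd} poly"
  assumes "p \<noteq> 0"
  shows "order a (gcd p (pderiv p)) = order a p - 1"
proof (cases "poly p a = 0")
  case True
  have "pderiv p \<noteq> 0"
  proof
    assume "pderiv p = 0"
    then obtain c where "p = [:c:]"
      using pderiv_iszero by blast
    with True assms show False by simp
  qed
  then show ?thesis
    using order_gcd[OF assms] order_pderiv[OF assms True] by simp
next
  case False
  then have "order a p = 0"
    by (rule order_0I)
  moreover have "order a (gcd p (pderiv p)) \<le> order a p"
    using assms by (simp add: dvd_imp_order_le)
  ultimately show ?thesis by simp
qed

fun gcd_pderiv_iter :: "'a::field_gcd poly \<Rightarrow> nat \<Rightarrow> 'a poly" where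
  "gcd_pderiv_iter p 0 = p"
| "gcd_pderiv_iter p (Suc j) = gcd (gcd_pderiv_iter p j) (pderiv (gcd_pderiv_iter p j))"

lemma gcd_pderiv_iter_dvd: "gcd_pderiv_iter p j dvd p"
  by (induction j) (auto intro: dvd_trans)

lemma gcd_pderiv_iter_eq_0_iff [simp]: "gcd_pderiv_iter p j = 0 \<longleftrightarrow> p = 0"
  by (induction j) auto

lemma order_gcd_pderiv_iter:
  fixes p :: "'a::{field_char_0,field_gcd} poly"
  assumes "p \<noteq> 0"
  shows "order a (gcd_pderiv_iter p j) = order a p - j"
  by (induction j) (simp_all add: assms order_gcd_pderiv)

lemma (in field_hom') map_poly_gcd_pderiv_iter:
  "map_poly hom (gcd_pderiv_iter p j) = gcd_pderiv_iter (map_poly hom p) j"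
  by (induction j) (simp_all add: map_poly_gcd map_poly_pderiv)

lemma order_pcompose_shift:
  fixes p :: "'a::idom poly"
  assumes "p \<noteq> 0"
  shows "order a (p \<circ>\<^sub>p [:-c, 1:]) = order (a - c) p"
proof -
  obtain g where p: "p = [:-(a - c), 1:] ^ order (a - c) p * g" and "\<not> [:-(a - c), 1:] dvd g"
    using order_decomp[OF assms] by blast
  then have g: "poly g (a - c) \<noteq> 0"
    by (simp add: poly_eq_0_iff_dvd)
  have "p \<circ>\<^sub>p [:-c, 1:] = [:-a, 1:] ^ order (a - c) p * (g \<circ>\<^sub>p [:-c, 1:])"
    by (subst p) (simp add: pcompose_mult pcompose_hom.hom_power pcompose_pCons)
  moreover have "poly (g \<circ>\<^sub>p [:-c, 1:]) a \<noteq> 0"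
    using g by (simp add: poly_pcompose)
  moreover from this have "g \<circ>\<^sub>p [:-c, 1:] \<noteq> 0"
    by auto
  ultimately show ?thesis
    by (simp add: order_mult order_power_n_n order_0I)
qed

lemma char_poly_add_scalar_mat:
  fixes A :: "'a::field_char_0 mat"
  assumes A: "A \<in> carrier_mat n n"
  shows "char_poly (A + k \<cdot>\<^sub>m 1\<^sub>m n) = char_poly A \<circ>\<^sub>p [:-k, 1:]"
proof -
  have "char_matrix (A + k \<cdot>\<^sub>m 1\<^sub>m n) x = char_matrix A (x - k)" for x
    using A by (intro eq_matI) (auto simp: char_matrix_def)
  moreover have "A + k \<cdot>\<^sub>m 1\<^sub>m n \<in> carrier_mat n n"
    using A by simp
  ultimately have "poly (char_poly (A + k \<cdot>\<^sub>m 1\<^sub>m n)) x = poly (char_poly A \<circ>\<^sub>p [:-k, 1:]) x" for x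
    by (simp add: char_poly_matrix[OF A] char_poly_matrix[of _ n] poly_pcompose)
  then show ?thesis
    by (simp add: poly_eq_poly_eq_iff[symmetric] fun_eq_iff)
qed

lemma symmetric_hermitian_form_real:
  fixes A :: "real mat" and v :: "complex vec"
  assumes A: "A \<in> carrier_mat n n" and sym: "transpose_mat A = A"
  shows "(\<Sum>i<n. cnj (v $ i) * (\<Sum>j<n. of_real (A $$ (i, j)) * v $ j)) \<in> \<real>"
    (is "?S \<in> \<real>")
proof -
  have A_sym: "A $$ (j, i) = A $$ (i, j)" if "i < n" "j < n" for i j
    using sym that A by (metis carrier_matD index_transpose_mat(1))
  have "cnj ?S = (\<Sum>i<n. \<Sum>j<n. v $ i * of_real (A $$ (i, j)) * cnj (v $ j))"
    by (simp add: sum_distrib_left mult_ac)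
  also have "\<dots> = (\<Sum>j<n. \<Sum>i<n. v $ i * of_real (A $$ (i, j)) * cnj (v $ j))"
    by (rule sum.swap)
  also have "\<dots> = ?S"
    by (auto simp: sum_distrib_left A_sym mult_ac intro!: sum.cong)
  finally show ?thesis
    by (simp add: Reals_cnj_iff)
qed

lemma char_poly_symmetric_real_roots:
  fixes A :: "real mat"
  assumes A: "A \<in> carrier_mat n n" and sym: "transpose_mat A = A"
    and root: "poly (map_poly complex_of_real (char_poly A)) z = 0"
  shows "z \<in> \<real>"
proof -
  let ?B = "map_mat complex_of_real A"
  have "eigenvalue ?B z"
    using root A by (simp add: eigenvalue_root_char_poly of_real_hom.char_poly_hom)
  then obtain v where v: "v \<in> carrier_vec n" "v \<noteq> 0\<^sub>v n" "?B *\<^sub>v v = z \<cdot>\<^sub>v v"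
    using A unfolding eigenvalue_def eigenvector_def by auto
  have Bv: "(\<Sum>j<n. of_real (A $$ (i, j)) * v $ j) = z * v $ i" if "i < n" for i
    using arg_cong[OF v(3), of "\<lambda>w. w $ i"] that A v(1)
    by (simp add: scalar_prod_def atLeast0LessThan)
  define N where "N = (\<Sum>i<n. (cmod (v $ i))\<^sup>2)"
  obtain i where "i < n" "v $ i \<noteq> 0"
    using v(1,2) by (metis eq_vecI carrier_vecD index_zero_vec)
  then have "N > 0"
    unfolding N_def by (intro sum_pos2[of _ i]) auto
  have "(\<Sum>i<n. cnj (v $ i) * (\<Sum>j<n. of_real (A $$ (i, j)) * v $ j))
      = (\<Sum>i<n. z * (v $ i * cnj (v $ i)))"
    by (intro sum.cong) (simp_all add: Bv)
  also have "\<dots> = z * of_real N"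
    by (simp add: N_def sum_distrib_left flip: complex_norm_square)
  finally have "z * of_real N \<in> \<real>"
    using symmetric_hermitian_form_real[OF A sym, of v] by simp
  moreover have "of_real N \<noteq> (0 :: complex)"
    using \<open>N > 0\<close> by simp
  ultimately show ?thesis
    by (metis Reals_divide Reals_of_real nonzero_mult_div_cancel_right)
qed

interpretation of_real_poly_hom: map_poly_idom_hom "of_real :: real \<Rightarrow> complex" ..

lemma real_rooted_poly_single_simple_root:
  fixes p :: "real poly"
  assumes p: "p \<noteq> 0"
    and real_roots: "\<And>z. poly (map_poly complex_of_real p) z = 0 \<Longrightarrow> z \<in> \<real>"
    and order_p: "\<And>a. order a p = (if a = r then 1 else 0)"
  shows "p = Polynomial.smult (lead_coeff p) [:-r, 1:]"
proof -
  obtain g where pg: "p = [:-r, 1:] * g" and g_r: "\<not> [:-r, 1:] dvd g"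
    using order_decomp[OF p, of r] order_p[of r] by auto
  have g_root_free: "poly g a \<noteq> 0" for a
  proof
    assume ga: "poly g a = 0"
    show False
    proof (cases "a = r")
      case True
      with ga g_r show False
        by (simp add: poly_eq_0_iff_dvd)
    next
      case False
      from ga have "poly p a = 0"
        by (simp add: pg)
      with p False order_p[of a] show False
        by (simp add: order_root)
    qed
  qed
  have "degree g = 0"
  proof (rule ccontr)
    assume "degree g \<noteq> 0"
    then obtain z where z: "poly (map_poly complex_of_real g) z = 0"
      using fundamental_theorem_of_algebra[of "map_poly complex_of_real g"]
      by (auto simp: constant_degree)
    then have "poly (map_poly complex_of_real p) z = 0"
      unfolding pg of_real_poly_hom.hom_mult by simp
    then obtain x where "z = of_real x"
      using real_roots Reals_cases by blast
    with z show False
      using g_root_free[of x] by (simp add: of_real_hom.poly_map_poly)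
  qed
  then obtain c where "g = [:c:]"
    by (meson degree_eq_zeroE)
  with pg show ?thesis
    by simp
qed

lemma dominant_root_rational:
  fixes p :: "rat poly" and r :: real
  defines "q \<equiv> map_poly of_rat p"
  assumes p: "p \<noteq> 0"
    and real_roots: "\<And>z. poly (map_poly complex_of_real q) z = 0 \<Longrightarrow> z \<in> \<real>"
    and dominant: "\<And>a. a \<noteq> r \<Longrightarrow> order a q < order r q"
  shows "r \<in> \<rat>"
proof -
  define m where "m = order r q"
  define H where "H = gcd_pderiv_iter q (m - 1)"
  have q: "q \<noteq> 0"
    using p by (simp add: q_def)
  have "m \<ge> 1"
    using dominant[of "r + 1"] by (simp add: m_def)
  then have order_H: "order a H = (if a = r then 1 else 0)" for a
    using dominant[of a] by (cases "a = r") (auto simp: H_def m_def order_gcd_pderiv_iter q)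
  have H_real_roots: "z \<in> \<real>" if "poly (map_poly complex_of_real H) z = 0" for z
  proof -
    obtain g where "q = H * g"
      using gcd_pderiv_iter_dvd unfolding H_def by (rule dvdE)
    with that show ?thesis
      using real_roots by (simp add: of_real_poly_hom.hom_mult)
  qed
  have H: "H \<noteq> 0"
    using q by (simp add: H_def)
  define c where "c = lead_coeff H"
  have "H = Polynomial.smult c [:-r, 1:]"
    unfolding c_def using H H_real_roots order_H by (rule real_rooted_poly_single_simple_root)
  then have coeffs: "coeff H 0 = - c * r" "coeff H 1 = c"
    by simp_all
  have "c \<noteq> 0"
    using H by (simp add: c_def)
  interpret field_hom' "of_rat :: rat \<Rightarrow> real"
    by unfold_locales
  have "H = map_poly of_rat (gcd_pderiv_iter p (m - 1))"
    by (simp add: H_def q_def map_poly_gcd_pderiv_iter)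
  then have "coeff H i \<in> \<rat>" for i
    by (simp add: coeff_map_poly)
  then have "- coeff H 0 / coeff H 1 \<in> \<rat>"
    by (simp add: Rats_divide Rats_minus_iff)
  with coeffs \<open>c \<noteq> 0\<close> show ?thesis
    by simp
qed

lemma eigenvalue_add_scalar_mat:
  fixes A :: "'a::field_char_0 mat"
  assumes "A \<in> carrier_mat n n"
  shows "eigenvalue (A + k \<cdot>\<^sub>m 1\<^sub>m n) \<mu> \<longleftrightarrow> eigenvalue A (\<mu> - k)"
  using assms
  by (simp add: eigenvalue_root_char_poly char_poly_add_scalar_mat poly_pcompose
      eigenvalue_root_char_poly[of "A + k \<cdot>\<^sub>m 1\<^sub>m n" n])

lemma eig_mult_add_scalar_mat:
  assumes "A \<in> carrier_mat n n"
  shows "eig_mult (A + k \<cdot>\<^sub>m 1\<^sub>m n) \<mu> = eig_mult A (\<mu> - k)"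
proof -
  have "char_poly A \<noteq> 0"
    using degree_monic_char_poly[OF assms] by auto
  then show ?thesis
    by (simp add: eig_mult_def char_poly_add_scalar_mat[OF assms] order_pcompose_shift)
qed

lemma symmetric_int_mat_dominant_eigenvalue_int:
  fixes Z :: "int mat" and r :: real
  defines "A \<equiv> map_mat of_int Z :: real mat"
  assumes Z: "Z \<in> carrier_mat n n" and sym: "transpose_mat Z = Z"
    and eigenvalue: "eigenvalue A r"
    and dominant: "\<And>\<mu>. eigenvalue A \<mu> \<Longrightarrow> \<mu> \<noteq> r \<Longrightarrow> eig_mult A \<mu> < eig_mult A r"
  shows "r \<in> \<int>"
proof -
  define q where "q = char_poly A"
  have A: "A \<in> carrier_mat n n"
    using Z by (simp add: A_def)
  have "transpose_mat A = A"
    using sym by (simp add: A_def map_mat_transpose)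
  then have real_roots: "poly (map_poly complex_of_real q) z = 0 \<Longrightarrow> z \<in> \<real>" for z
    unfolding q_def by (rule char_poly_symmetric_real_roots[OF A])
  have root: "poly q r = 0"
    using eigenvalue A by (simp add: q_def eigenvalue_root_char_poly)
  have q_dominant: "order a q < order r q" if "a \<noteq> r" for a
  proof (cases "poly q a = 0")
    case True
    with that dominant[of a] A show ?thesis
      by (simp add: q_def eig_mult_def eigenvalue_root_char_poly)
  next
    case False
    moreover have "q \<noteq> 0"
      using degree_monic_char_poly[OF A] by (auto simp: q_def)
    ultimately show ?thesis
      using root by (simp add: order_0I order_gt_0_iff)
  qed
  have q_int: "q = map_poly of_int (char_poly Z)"
    unfolding q_def A_def by (rule of_int_hom.char_poly_hom[OF Z])
  have "q = map_poly of_rat (map_poly of_int (char_poly Z))"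
    unfolding q_int by (simp add: map_poly_map_poly o_def)
  moreover have "map_poly of_int (char_poly Z) \<noteq> (0 :: rat poly)"
    using degree_monic_char_poly[OF Z] by auto
  ultimately have "r \<in> \<rat>"
    using dominant_root_rational[of "map_poly of_int (char_poly Z)" r] real_roots q_dominant by simp
  moreover have "algebraic_int r"
    using root degree_monic_char_poly[OF Z] unfolding algebraic_int_altdef_ipoly q_int by auto
  ultimately show ?thesis
    by (intro rational_algebraic_int_is_int)
qed

lemma symmetric_int_offdiag_mat_decomp:
  fixes M :: "real mat"
  assumes M: "M \<in> carrier_mat n n" and sym: "transpose_mat M = M"
    and diag: "\<And>i. i < n \<Longrightarrow> M $$ (i, i) = k"
    and offdiag: "\<And>i j. i < n \<Longrightarrow> j < n \<Longrightarrow> i \<noteq> j \<Longrightarrow> M $$ (i, j) \<in> \<int>"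
  obtains Z :: "int mat" where "Z \<in> carrier_mat n n" "transpose_mat Z = Z"
    "M = map_mat of_int Z + k \<cdot>\<^sub>m 1\<^sub>m n"
proof
  define Z where "Z = map_mat floor (M - k \<cdot>\<^sub>m 1\<^sub>m n)"
  show "Z \<in> carrier_mat n n"
    using M by (simp add: Z_def minus_carrier_mat)
  have M_sym: "M $$ (j, i) = M $$ (i, j)" if "i < n" "j < n" for i j
    using M sym that by (metis carrier_matD index_transpose_mat(1))
  show "transpose_mat Z = Z"
    using M by (intro eq_matI) (auto simp: Z_def M_sym)
  have M_offdiag: "of_int \<lfloor>M $$ (i, j)\<rfloor> = M $$ (i, j)" if "i < n" "j < n" "i \<noteq> j" for i j
    using offdiag[OF that] by (auto elim: Ints_cases)
  show "M = map_mat of_int Z + k \<cdot>\<^sub>m 1\<^sub>m n"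
    using M by (intro eq_matI) (auto simp: Z_def diag M_offdiag)
qed

theorem lemma2p4:
  fixes M :: "real mat" and n :: nat and k :: real
  assumes "M \<in> carrier_mat n n"
    and "transpose_mat M = M"
    and "\<And>i. i < n \<Longrightarrow> M $$ (i, i) = k"
    and "\<And>i j. i < n \<Longrightarrow> j < n \<Longrightarrow> i \<noteq> j \<Longrightarrow> M $$ (i, j) \<in> \<int>"
    and "eigenvalue M 0"
    and "\<And>\<mu>. eigenvalue M \<mu> \<Longrightarrow> \<mu> \<noteq> 0 \<Longrightarrow> eig_mult M \<mu> < eig_mult M 0"
  shows "k \<in> \<int>"
proof -
  obtain Z where Z: "Z \<in> carrier_mat n n" "transpose_mat Z = Z"
    and M: "M = map_mat of_int Z + k \<cdot>\<^sub>m 1\<^sub>m n"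
    using symmetric_int_offdiag_mat_decomp[OF assms(1-4)] by blast
  have A: "(map_mat of_int Z :: real mat) \<in> carrier_mat n n"
    using Z by simp
  note shift = eigenvalue_add_scalar_mat[OF A] eig_mult_add_scalar_mat[OF A]
  have "- k \<in> \<int>"
  proof (rule symmetric_int_mat_dominant_eigenvalue_int[OF Z])
    show "eigenvalue (map_mat of_int Z) (- k)"
      using assms(5) by (simp add: M shift)
    show "eig_mult (map_mat of_int Z) \<mu> < eig_mult (map_mat of_int Z) (- k)"
      if "eigenvalue (map_mat of_int Z) \<mu>" "\<mu> \<noteq> - k" for \<mu>
      using assms(6)[of "\<mu> + k"] that by (simp add: M shift add_eq_0_iff2)
  qed
  then show ?thesis
    by (metis Ints_minus minus_minus)
qed

end
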